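(* Let $\varphi:X\to\mathbb R$ be Lipschitz continuous. If $\underline{x}\in\Omega_\varphi$, then the sequence $\left\{\sum_{i=0}^{n-1}\big(\varphi(\sigma^i\underline{x})-\alpha_\varphi\big)\right\}_{n\in\mathbb N_0}$ is bounded.
   Context: $X=[0,1]^{\mathbb N_0}$ with metric $d_X(\underline{x},\underline{y})=\sum_{i\ge0}|x_i-y_i|/2^{i+1}$ and shift $\sigma(\underline{x})_i=x_{i+1}$. $\alpha_\varphi=\inf_\mu\int\varphi\,d\mu$ over $\sigma$-invariant Borel probability measures. $B(\underline{x},\underline{y},n;\varepsilon)=\{\underline{z}: d_X(\underline{x},\underline{z})<\varepsilon,\ d_X(\sigma^n\underline{z},\underline{y})<\varepsilon\}$. Mañé potential $S_\varphi(\underline{x},\underline{y})=\lim_{\varepsilon\to0}\inf\{\sum_{i=0}^{n-1}(\varphi(\sigma^i\underline{z})-\alpha_\varphi): n\in\mathbb N,\ \underline{z}\in B(\underline{x},\underline{y},n;\varepsilon)\}$; Aubry set $\Omega_\varphi=\{\underline{x}: S_\varphi(\underline{x},\underline{x})=0\}$. *)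

theory Defs
  imports "HOL-Probability.Probability"
begin

type_synonym seq = "nat \<Rightarrow> real"

definition XX :: "seq set" where
  "XX = {x. \<forall>i. x i \<in> {0..1}}"

definition dX :: "seq \<Rightarrow> seq \<Rightarrow> real" where
  "dX x y = (\<Sum>i. \<bar>x i - y i\<bar> / 2 ^ (Suc i))"

definition shift :: "seq \<Rightarrow> seq" where
  "shift x = (\<lambda>i. x (Suc i))"

definition dX_open :: "seq set \<Rightarrow> bool" where
  "dX_open U \<longleftrightarrow> U \<subseteq> XX \<and>
     (\<forall>x\<in>U. \<exists>e>0. \<forall>y\<in>XX. dX x y < e \<longrightarrow> y \<in> U)"

definition borel_X :: "seq set set" where
  "borel_X = sigma_sets XX {U. dX_open U}"

definition invariant_prob :: "seq measure \<Rightarrow> bool" where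
  "invariant_prob \<mu> \<longleftrightarrow> prob_space \<mu> \<and> space \<mu> = XX \<and> sets \<mu> = borel_X \<and>
     shift \<in> measurable \<mu> \<mu> \<and> distr \<mu> \<mu> shift = \<mu>"

definition alpha :: "(seq \<Rightarrow> real) \<Rightarrow> real" where
  "alpha \<phi> = Inf {integral\<^sup>L \<mu> \<phi> | \<mu>. invariant_prob \<mu>}"

definition Bset :: "seq \<Rightarrow> seq \<Rightarrow> nat \<Rightarrow> real \<Rightarrow> seq set" where
  "Bset x y n \<epsilon> = {z \<in> XX. dX x z < \<epsilon> \<and> dX ((shift ^^ n) z) y < \<epsilon>}"

definition mane_eps :: "(seq \<Rightarrow> real) \<Rightarrow> seq \<Rightarrow> seq \<Rightarrow> real \<Rightarrow> ereal" where
  "mane_eps \<phi> x y \<epsilon> = Inf {ereal (\<Sum>i<n. \<phi> ((shift ^^ i) z) - alpha \<phi>) | n z.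
      n \<ge> 1 \<and> z \<in> Bset x y n \<epsilon>}"

definition mane :: "(seq \<Rightarrow> real) \<Rightarrow> seq \<Rightarrow> seq \<Rightarrow> ereal" where
  "mane \<phi> x y = Lim (at_right 0) (mane_eps \<phi> x y)"

definition aubry :: "(seq \<Rightarrow> real) \<Rightarrow> seq set" where
  "aubry \<phi> = {x \<in> XX. mane \<phi> x x = 0}"

definition lipschitz_X :: "(seq \<Rightarrow> real) \<Rightarrow> bool" where
  "lipschitz_X \<phi> \<longleftrightarrow> (\<exists>L. \<forall>x\<in>XX. \<forall>y\<in>XX. \<bar>\<phi> x - \<phi> y\<bar> \<le> L * dX x y)"

end

theory Submission
  imports Defs
begin

text \<open>Let \<open>S\<^sub>n w\<close> be the Birkhoff sum of \<open>\<phi> - \<alpha>\<^sub>\<phi>\<close> over the first \<open>n\<close> points of the orbit of \<open>w\<close>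
  and \<open>L\<close> a Lipschitz constant of \<open>\<phi>\<close>.
  Lower bound: the sequence \<open>q\<close> repeating \<open>w 0, \<dots>, w (n - 1)\<close> periodically carries the uniform
  invariant measure on its orbit, so \<open>S\<^sub>n q \<ge> 0\<close>; as \<open>q\<close> and \<open>w\<close> share their first \<open>n\<close> symbols,
  the distances between their orbits sum to at most \<open>1\<close>, whence \<open>S\<^sub>n w \<ge> -L\<close>.
  Upper bound: for \<open>x\<close> in the Aubry set and every \<open>\<epsilon> > 0\<close> there is an orbit segment
  \<open>z, \<dots>, \<sigma>\<^sup>m z\<close> starting and ending \<open>\<epsilon>\<close>-close to \<open>x\<close> with \<open>S\<^sub>m z < \<epsilon>\<close>. Periodizing it gives
  \<open>q\<close> with \<open>S\<^sub>m q = O(\<epsilon>)\<close>; then \<open>S\<^sub>n q \<le> n S\<^sub>m q + L\<close> by the lower bound for the remaining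
  \<open>n m - n\<close> steps, and \<open>S\<^sub>n x \<le> S\<^sub>n q + O(n 2\<^sup>n \<epsilon>)\<close>. Letting \<open>\<epsilon> \<rightarrow> 0\<close> gives \<open>S\<^sub>n x \<le> L\<close>.\<close>

section \<open>The metric on sequences\<close>

lemma shift_funpow_apply: "(shift ^^ k) x i = x (i + k)"
  by (induction k arbitrary: i) (auto simp: shift_def)

lemma shift_funpow_in_XX: "x \<in> XX \<Longrightarrow> (shift ^^ k) x \<in> XX"
  by (auto simp: XX_def shift_funpow_apply)

lemma dX_term_le:
  assumes "x \<in> XX" "y \<in> XX"
  shows "\<bar>x i - y i\<bar> / 2 ^ Suc i \<le> (1/2) ^ Suc i"
proof -
  have "x i \<in> {0..1}" "y i \<in> {0..1}"
    using assms by (auto simp: XX_def)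
  then have "\<bar>x i - y i\<bar> \<le> 1"
    by (auto simp: abs_le_iff)
  then show ?thesis by (simp add: divide_right_mono power_one_over)
qed

lemma summable_half_power_Suc: "summable (\<lambda>i. (1/2::real) ^ Suc i)"
  using summable_mult[OF summable_geometric, of "1/2" "1/2"] by simp

lemma summable_dX:
  "x \<in> XX \<Longrightarrow> y \<in> XX \<Longrightarrow> summable (\<lambda>i. \<bar>x i - y i\<bar> / 2 ^ Suc i)"
  by (rule summable_comparison_test[OF _ summable_half_power_Suc]) (use dX_term_le in auto)

lemma dX_nonneg: "x \<in> XX \<Longrightarrow> y \<in> XX \<Longrightarrow> 0 \<le> dX x y"
  unfolding dX_def by (intro suminf_nonneg summable_dX) auto

lemma suminf_half_power_Suc: "(\<Sum>i. (1/2::real) ^ Suc i) = 1"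
proof -
  have "(\<Sum>i. (1/2::real) * (1/2) ^ i) = 1/2 * (\<Sum>i. (1/2::real) ^ i)"
    by (intro suminf_mult summable_geometric) simp
  also have "\<dots> = 1"
    using suminf_geometric[of "1/2::real"] by simp
  finally show ?thesis by simp
qed

lemma dX_le_1:
  assumes "x \<in> XX" "y \<in> XX"
  shows "dX x y \<le> 1"
proof -
  have "dX x y \<le> (\<Sum>i. (1/2::real) ^ Suc i)"
    unfolding dX_def
    by (rule suminf_le) (use assms dX_term_le summable_dX summable_half_power_Suc in auto)
  then show ?thesis
    by (simp only: suminf_half_power_Suc)
qed

lemma dX_commute: "dX x y = dX y x"
  unfolding dX_def by (simp add: abs_minus_commute)

lemma dX_triangle:
  assumes "x \<in> XX" "y \<in> XX" "z \<in> XX"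
  shows "dX x z \<le> dX x y + dX y z"
proof -
  let ?t = "\<lambda>u v i. \<bar>u i - v i\<bar> / 2 ^ Suc i"
  have "dX x z \<le> (\<Sum>i. ?t x y i + ?t y z i)"
    unfolding dX_def
  proof (rule suminf_le)
    show "?t x z i \<le> ?t x y i + ?t y z i" for i
      by (simp add: add_divide_distrib[symmetric] divide_right_mono)
  qed (use assms in \<open>intro summable_add summable_dX; simp\<close>)+
  also have "\<dots> = dX x y + dX y z"
    unfolding dX_def using assms by (intro suminf_add[symmetric] summable_dX) auto
  finally show ?thesis .
qed

lemma dX_split_initial:
  assumes "x \<in> XX" "y \<in> XX"
  shows "dX x y = (\<Sum>i<K. \<bar>x i - y i\<bar> / 2 ^ Suc i) + dX ((shift ^^ K) x) ((shift ^^ K) y) / 2 ^ K"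
proof -
  have tail: "summable (\<lambda>i. \<bar>x (i + K) - y (i + K)\<bar> / 2 ^ Suc i)"
    using summable_dX[OF shift_funpow_in_XX[OF assms(1)] shift_funpow_in_XX[OF assms(2)]]
    by (simp add: shift_funpow_apply del: power_Suc)
  have "dX x y = (\<Sum>i. \<bar>x (i + K) - y (i + K)\<bar> / 2 ^ Suc (i + K)) + (\<Sum>i<K. \<bar>x i - y i\<bar> / 2 ^ Suc i)"
    unfolding dX_def by (rule suminf_split_initial_segment[OF summable_dX[OF assms]])
  also have "(\<lambda>i. \<bar>x (i + K) - y (i + K)\<bar> / 2 ^ Suc (i + K))
      = (\<lambda>i. \<bar>x (i + K) - y (i + K)\<bar> / 2 ^ Suc i / 2 ^ K)"
    by (simp add: power_add mult.assoc)
  also have "suminf \<dots> = dX ((shift ^^ K) x) ((shift ^^ K) y) / 2 ^ K"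
    unfolding suminf_divide[OF tail] by (simp add: dX_def shift_funpow_apply)
  finally show ?thesis by simp
qed

lemma dX_eq_shift_funpow_div_if_agree:
  assumes "x \<in> XX" "y \<in> XX" "\<And>i. i < K \<Longrightarrow> x i = y i"
  shows "dX x y = dX ((shift ^^ K) x) ((shift ^^ K) y) / 2 ^ K"
  using dX_split_initial[OF assms(1,2), of K] assms(3) by simp

lemma dX_shift_funpow_le:
  assumes "x \<in> XX" "y \<in> XX"
  shows "dX ((shift ^^ K) x) ((shift ^^ K) y) \<le> 2 ^ K * dX x y"
proof -
  have "0 \<le> (\<Sum>i<K. \<bar>x i - y i\<bar> / 2 ^ Suc i)" by (intro sum_nonneg) auto
  then show ?thesis using dX_split_initial[OF assms, of K] by (simp add: field_simps)
qed

lemma orbit_dX_sum_le_if_agree: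
  assumes "x \<in> XX" "y \<in> XX" "\<And>j. j < n \<Longrightarrow> x j = y j"
  shows "(\<Sum>i<n. dX ((shift ^^ i) x) ((shift ^^ i) y)) \<le> dX ((shift ^^ n) x) ((shift ^^ n) y)"
  using assms(3)
proof (induction n)
  case (Suc n)
  let ?d = "\<lambda>i. dX ((shift ^^ i) x) ((shift ^^ i) y)"
  have "?d n = ?d (Suc n) / 2"
    using dX_eq_shift_funpow_div_if_agree[of "(shift ^^ n) x" "(shift ^^ n) y" 1] Suc.prems
    by (simp add: shift_funpow_in_XX assms shift_funpow_apply)
  moreover have "(\<Sum>i<n. ?d i) \<le> ?d n"
    using Suc by simp
  ultimately show ?case by simp
qed (simp add: dX_nonneg assms)

lemma orbit_dX_sum_le:
  assumes "x \<in> XX" "y \<in> XX"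
  shows "(\<Sum>i<n. dX ((shift ^^ i) x) ((shift ^^ i) y)) \<le> n * (2 ^ n * dX x y)"
proof -
  have "dX ((shift ^^ i) x) ((shift ^^ i) y) \<le> 2 ^ n * dX x y" if "i < n" for i
  proof -
    have "(2::real) ^ i * dX x y \<le> 2 ^ n * dX x y"
      using dX_nonneg[OF assms] that by (intro mult_right_mono power_increasing) auto
    then show ?thesis
      using dX_shift_funpow_le[OF assms, of i] by linarith
  qed
  then have "(\<Sum>i<n. dX ((shift ^^ i) x) ((shift ^^ i) y)) \<le> card {..<n} * (2 ^ n * dX x y)"
    by (intro sum_bounded_above) simp
  then show ?thesis by simp
qed

section \<open>Periodic sequences and Birkhoff sums\<close>

definition periodic_ext :: "seq \<Rightarrow> nat \<Rightarrow> seq" where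
  "periodic_ext w m = (\<lambda>j. w (j mod m))"

lemma periodic_ext_in_XX: "w \<in> XX \<Longrightarrow> periodic_ext w m \<in> XX"
  by (auto simp: XX_def periodic_ext_def)

lemma shift_funpow_periodic_ext: "(shift ^^ m) (periodic_ext w m) = periodic_ext w m"
  by (rule ext) (simp add: shift_funpow_apply periodic_ext_def)

lemma periodic_ext_apply_less: "i < m \<Longrightarrow> periodic_ext w m i = w i"
  by (simp add: periodic_ext_def)

definition birkhoff_sum :: "(seq \<Rightarrow> real) \<Rightarrow> seq \<Rightarrow> nat \<Rightarrow> real" where
  "birkhoff_sum f w n = (\<Sum>i<n. f ((shift ^^ i) w))"

lemma birkhoff_sum_add:
  "birkhoff_sum f w (a + b) = birkhoff_sum f w a + birkhoff_sum f ((shift ^^ a) w) b"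
proof (induction b)
  case (Suc b)
  have "(shift ^^ (a + b)) w = (shift ^^ b) ((shift ^^ a) w)"
    by (metis add.commute funpow_add o_apply)
  then show ?case
    using Suc by (simp add: birkhoff_sum_def)
qed (simp add: birkhoff_sum_def)

lemma birkhoff_sum_periodic:
  assumes "(shift ^^ m) q = q"
  shows "birkhoff_sum f q (k * m) = k * birkhoff_sum f q m"
proof (induction k)
  case (Suc k)
  have "birkhoff_sum f q (Suc k * m) = birkhoff_sum f q m + birkhoff_sum f q (k * m)"
    using birkhoff_sum_add[of f q m "k * m"] assms by simp
  then show ?case
    using Suc by (simp add: algebra_simps)
qed (simp add: birkhoff_sum_def)

definition lipschitz_X_with :: "real \<Rightarrow> (seq \<Rightarrow> real) \<Rightarrow> bool" where
  "lipschitz_X_with L f \<longleftrightarrow> 0 \<le> L \<and> (\<forall>x\<in>XX. \<forall>y\<in>XX. \<bar>f x - f y\<bar> \<le> L * dX x y)"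

lemma lipschitz_X_withD:
  "lipschitz_X_with L f \<Longrightarrow> x \<in> XX \<Longrightarrow> y \<in> XX \<Longrightarrow> \<bar>f x - f y\<bar> \<le> L * dX x y"
  unfolding lipschitz_X_with_def by blast

lemma lipschitz_X_with_nonneg: "lipschitz_X_with L f \<Longrightarrow> 0 \<le> L"
  unfolding lipschitz_X_with_def by blast

lemma lipschitz_X_with_diff_const:
  "lipschitz_X_with L f \<Longrightarrow> lipschitz_X_with L (\<lambda>y. f y - c)"
  unfolding lipschitz_X_with_def by simp

lemma lipschitz_X_obtain_const:
  assumes "lipschitz_X f"
  obtains L where "lipschitz_X_with L f"
proof -
  obtain L where L: "\<forall>x\<in>XX. \<forall>y\<in>XX. \<bar>f x - f y\<bar> \<le> L * dX x y"
    using assms unfolding lipschitz_X_def by blast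
  show ?thesis
  proof (rule that)
    show "lipschitz_X_with (max L 0) f"
      unfolding lipschitz_X_with_def
    proof (intro conjI ballI)
      fix x y assume xy: "x \<in> XX" "y \<in> XX"
      have "L * dX x y \<le> max L 0 * dX x y"
        using dX_nonneg[OF xy] by (intro mult_right_mono) auto
      then show "\<bar>f x - f y\<bar> \<le> max L 0 * dX x y"
        using L xy by fastforce
    qed simp
  qed
qed

lemma lipschitz_X_with_bounded:
  assumes "lipschitz_X_with L f" "x \<in> XX" "y \<in> XX"
  shows "\<bar>f x\<bar> \<le> \<bar>f y\<bar> + L"
proof -
  have "\<bar>f x - f y\<bar> \<le> L * dX x y"
    using lipschitz_X_withD[OF assms] .
  also have "\<dots> \<le> L"
    using dX_le_1[OF assms(2,3)] lipschitz_X_with_nonneg[OF assms(1)]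
    by (simp add: mult_left_le)
  finally show ?thesis by simp
qed

lemma birkhoff_sum_le_lipschitz:
  assumes "lipschitz_X_with L f" "w \<in> XX" "w' \<in> XX"
  shows "birkhoff_sum f w n \<le> birkhoff_sum f w' n + L * (\<Sum>i<n. dX ((shift ^^ i) w) ((shift ^^ i) w'))"
proof -
  have "birkhoff_sum f w n = (\<Sum>i<n. f ((shift ^^ i) w') + (f ((shift ^^ i) w) - f ((shift ^^ i) w')))"
    unfolding birkhoff_sum_def by simp
  also have "\<dots> \<le> (\<Sum>i<n. f ((shift ^^ i) w') + L * dX ((shift ^^ i) w) ((shift ^^ i) w'))"
  proof (intro sum_mono add_left_mono)
    fix i
    show "f ((shift ^^ i) w) - f ((shift ^^ i) w') \<le> L * dX ((shift ^^ i) w) ((shift ^^ i) w')"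
      using abs_le_D1[OF lipschitz_X_withD[OF assms(1) shift_funpow_in_XX[OF assms(2)]
            shift_funpow_in_XX[OF assms(3)]]] .
  qed
  also have "\<dots> = birkhoff_sum f w' n + L * (\<Sum>i<n. dX ((shift ^^ i) w) ((shift ^^ i) w'))"
    unfolding birkhoff_sum_def sum.distrib sum_distrib_left ..
  finally show ?thesis .
qed

section \<open>Invariant measures on periodic orbits\<close>

definition MX :: "seq measure" where
  "MX = sigma XX {U. dX_open U}"

lemma space_MX [simp]: "space MX = XX"
  by (simp add: MX_def space_measure_of_conv)

lemma sets_MX: "sets MX = borel_X"
  unfolding MX_def borel_X_def by (rule sets_measure_of) (auto simp: dX_open_def)

lemma dX_open_in_sets_MX: "dX_open U \<Longrightarrow> U \<in> sets MX"
  unfolding sets_MX borel_X_def by (rule sigma_sets.Basic) simp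

lemma dX_open_vimage_shift:
  assumes "dX_open U"
  shows "dX_open (shift -` U \<inter> XX)"
  unfolding dX_open_def
proof (intro conjI ballI)
  fix y assume y: "y \<in> shift -` U \<inter> XX"
  then obtain e where e: "e > 0" "\<forall>y'\<in>XX. dX (shift y) y' < e \<longrightarrow> y' \<in> U"
    using assms unfolding dX_open_def by blast
  show "\<exists>e>0. \<forall>y'\<in>XX. dX y y' < e \<longrightarrow> y' \<in> shift -` U \<inter> XX"
  proof (intro exI[of _ "e / 2"] conjI ballI impI)
    fix y' assume y': "y' \<in> XX" "dX y y' < e / 2"
    have "dX (shift y) (shift y') \<le> 2 * dX y y'"
      using dX_shift_funpow_le[of y y' 1] y y' by simp
    then show "y' \<in> shift -` U \<inter> XX"
      using e y' shift_funpow_in_XX[of y' 1] by simp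
  qed (use e in simp)
qed simp

lemma shift_measurable: "shift \<in> MX \<rightarrow>\<^sub>M MX"
proof -
  have "shift \<in> MX \<rightarrow>\<^sub>M measure_of XX {U. dX_open U} (\<lambda>_. 0)"
  proof (rule measurable_measure_of)
    show "shift \<in> space MX \<rightarrow> XX"
      using shift_funpow_in_XX[of _ 1] by simp
    show "shift -` U \<inter> space MX \<in> sets MX" if "U \<in> {U. dX_open U}" for U
      using dX_open_vimage_shift that by (simp add: dX_open_in_sets_MX)
  qed (auto simp: dX_open_def)
  then show ?thesis by (simp add: MX_def)
qed

lemma dX_open_vimage_lipschitz:
  assumes "lipschitz_X_with L f" "open S"
  shows "dX_open (f -` S \<inter> XX)"
  unfolding dX_open_def
proof (intro conjI ballI)
  fix y assume y: "y \<in> f -` S \<inter> XX"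
  then obtain r where r: "r > 0" "ball (f y) r \<subseteq> S"
    using \<open>open S\<close> open_contains_ball by blast
  have L: "0 \<le> L"
    using lipschitz_X_with_nonneg[OF assms(1)] .
  show "\<exists>e>0. \<forall>y'\<in>XX. dX y y' < e \<longrightarrow> y' \<in> f -` S \<inter> XX"
  proof (intro exI[of _ "r / (L + 1)"] conjI ballI impI)
    fix y' assume y': "y' \<in> XX" "dX y y' < r / (L + 1)"
    have "\<bar>f y - f y'\<bar> \<le> L * dX y y'"
      using lipschitz_X_withD[OF assms(1)] y y' by blast
    also have "\<dots> \<le> L * (r / (L + 1))"
      using y' L by (intro mult_left_mono) auto
    also have "\<dots> < r"
      using r L by (simp add: field_simps)
    finally have "f y' \<in> ball (f y) r"
      by (simp add: dist_real_def)
    then show "y' \<in> f -` S \<inter> XX"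
      using r y' by blast
  qed (use r L in simp)
qed simp

lemma borel_measurable_lipschitz_X_with:
  "lipschitz_X_with L f \<Longrightarrow> f \<in> borel_measurable MX"
  by (rule borel_measurableI) (simp add: dX_open_vimage_lipschitz dX_open_in_sets_MX)

lemma alpha_le_integral:
  assumes "lipschitz_X_with L f" "invariant_prob \<mu>"
  shows "alpha f \<le> integral\<^sup>L \<mu> f"
proof -
  let ?B = "\<bar>f (\<lambda>_. 0)\<bar> + L"
  have zero: "(\<lambda>_. 0) \<in> XX"
    by (simp add: XX_def)
  have lower: "- ?B \<le> f x" if "x \<in> XX" for x
    using lipschitz_X_with_bounded[OF assms(1) that zero] unfolding abs_le_iff by linarith
  have "- ?B \<le> integral\<^sup>L \<nu> f" if "invariant_prob \<nu>" for \<nu>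
  proof -
    have \<nu>: "prob_space \<nu>" "space \<nu> = XX"
      using that unfolding invariant_prob_def by auto
    show ?thesis
    proof (cases "integrable \<nu> f")
      case True
      have "integral\<^sup>L \<nu> (\<lambda>_. - ?B) \<le> integral\<^sup>L \<nu> f"
        using lower \<nu>
        by (intro integral_mono True)
          (auto simp: prob_space.finite_measure finite_measure.integrable_const)
      then show ?thesis
        using \<nu> prob_space.prob_space[of \<nu>] by simp
    next
      case False
      then show ?thesis
        using lipschitz_X_with_nonneg[OF assms(1)] by (simp add: not_integrable_integral_eq)
    qed
  qed
  \<comment> \<open>needed because \<open>Inf\<close> of a real set that is unbounded below is an unspecified value\<close>
  then have "bdd_below {integral\<^sup>L \<nu> f | \<nu>. invariant_prob \<nu>}"
    by (intro bdd_belowI[of _ "- ?B"]) blast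
  then show ?thesis
    unfolding alpha_def using assms(2) by (intro cInf_lower) blast+
qed

lemma bij_betw_Suc_mod: "0 < m \<Longrightarrow> bij_betw (\<lambda>i. Suc i mod m) {..<m} {..<m}"
proof -
  assume m: "0 < m"
  have "inj_on (\<lambda>i. Suc i mod m) {..<m}"
  proof (rule inj_onI)
    fix i j assume ij: "i \<in> {..<m}" "j \<in> {..<m}" "Suc i mod m = Suc j mod m"
    then show "i = j"
      by (cases "Suc i = m"; cases "Suc j = m") auto
  qed
  moreover have "(\<lambda>i. Suc i mod m) ` {..<m} = {..<m}"
    using calculation m by (intro endo_inj_surj) auto
  ultimately show ?thesis
    by (simp add: bij_betw_def)
qed

definition periodic_orbit_measure :: "seq \<Rightarrow> nat \<Rightarrow> seq measure" where
  "periodic_orbit_measure q m = distr (measure_pmf (pmf_of_set {..<m})) MX (\<lambda>i. (shift ^^ i) q)"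

lemma integral_periodic_orbit_measure:
  assumes "q \<in> XX" "0 < m" "f \<in> borel_measurable MX"
  shows "integral\<^sup>L (periodic_orbit_measure q m) f = (\<Sum>i<m. f ((shift ^^ i) q)) / m"
proof -
  have "integral\<^sup>L (periodic_orbit_measure q m) f
      = integral\<^sup>L (measure_pmf (pmf_of_set {..<m})) (\<lambda>i. f ((shift ^^ i) q))"
    unfolding periodic_orbit_measure_def
    using assms by (intro integral_distr) (auto simp: shift_funpow_in_XX)
  also have "\<dots> = (\<Sum>i<m. f ((shift ^^ i) q)) / m"
    using assms(2) by (subst integral_pmf_of_set) auto
  finally show ?thesis .
qed

lemma invariant_prob_periodic_orbit_measure:
  assumes q: "q \<in> XX" and m: "0 < m" and periodic: "(shift ^^ m) q = q"
  shows "invariant_prob (periodic_orbit_measure q m)"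
proof -
  define P where "P = measure_pmf (pmf_of_set {..<m})"
  define orbit where "orbit = (\<lambda>i. (shift ^^ i) q)"
  define rotate where "rotate = (\<lambda>i. Suc i mod m)"
  let ?\<mu> = "periodic_orbit_measure q m"
  have \<mu>: "?\<mu> = distr P MX orbit"
    unfolding periodic_orbit_measure_def P_def orbit_def ..
  have orbit_P: "orbit \<in> P \<rightarrow>\<^sub>M MX" and orbit_count: "orbit \<in> count_space UNIV \<rightarrow>\<^sub>M MX"
    unfolding P_def orbit_def using shift_funpow_in_XX[OF q] by auto
  have sets_\<mu>: "sets ?\<mu> = sets MX"
    unfolding \<mu> by simp
  have "map_pmf rotate (pmf_of_set {..<m}) = pmf_of_set {..<m}"
    unfolding rotate_def using m by (intro map_pmf_of_set_bij_betw bij_betw_Suc_mod) auto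
  then have rotate_P: "distr P (count_space UNIV) rotate = P"
    unfolding P_def by (metis map_pmf_rep_eq)
  have "shift \<circ> orbit = orbit \<circ> rotate"
  proof
    fix i
    show "(shift \<circ> orbit) i = (orbit \<circ> rotate) i"
      unfolding orbit_def rotate_def using funpow_mod_eq[where f=shift and n=m and x=q and m="Suc i"] periodic
      by simp
  qed
  have "distr ?\<mu> ?\<mu> shift = distr P MX (shift \<circ> orbit)"
    unfolding \<mu> using sets_\<mu> by (simp add: distr_distr[OF shift_measurable orbit_P] cong: distr_cong)
  also have "\<dots> = distr (distr P (count_space UNIV) rotate) MX orbit"
    unfolding \<open>shift \<circ> orbit = orbit \<circ> rotate\<close> P_def rotate_def
    by (subst distr_distr[OF orbit_count]) auto
  also have "\<dots> = ?\<mu>"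
    unfolding rotate_P \<mu> ..
  finally have "distr ?\<mu> ?\<mu> shift = ?\<mu>" .
  moreover have "prob_space ?\<mu>"
    unfolding \<mu> P_def by (intro prob_space.prob_space_distr orbit_P[unfolded P_def]) (rule prob_space_measure_pmf)
  moreover have "shift \<in> ?\<mu> \<rightarrow>\<^sub>M ?\<mu>"
    using shift_measurable measurable_cong_sets[OF sets_\<mu> sets_\<mu>] by simp
  ultimately show ?thesis
    unfolding invariant_prob_def using sets_\<mu> by (simp add: sets_MX \<mu>)
qed

lemma alpha_le_periodic_orbit_average:
  assumes "lipschitz_X_with L f" "q \<in> XX" "0 < m" "(shift ^^ m) q = q"
  shows "alpha f \<le> (\<Sum>i<m. f ((shift ^^ i) q)) / m"
  using alpha_le_integral[OF assms(1) invariant_prob_periodic_orbit_measure[OF assms(2-4)]]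
    integral_periodic_orbit_measure[OF assms(2,3) borel_measurable_lipschitz_X_with[OF assms(1)]]
  by simp

section \<open>Bounds on the Birkhoff sums\<close>

lemma birkhoff_sum_ge_neg_lipschitz_const:
  assumes lip: "lipschitz_X_with L \<phi>" and w: "w \<in> XX"
  shows "- L \<le> birkhoff_sum (\<lambda>y. \<phi> y - alpha \<phi>) w n"
proof (cases "n = 0")
  case True
  then show ?thesis
    using lipschitz_X_with_nonneg[OF lip] by (simp add: birkhoff_sum_def)
next
  case False
  let ?f = "\<lambda>y. \<phi> y - alpha \<phi>"
  define q where "q = periodic_ext w n"
  have q: "q \<in> XX"
    unfolding q_def using periodic_ext_in_XX[OF w] .
  have "alpha \<phi> \<le> (\<Sum>i<n. \<phi> ((shift ^^ i) q)) / n"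
    using alpha_le_periodic_orbit_average[OF lip q] False shift_funpow_periodic_ext q_def by simp
  then have "0 \<le> birkhoff_sum ?f q n"
    using False by (simp add: birkhoff_sum_def sum_subtractf field_simps)
  also have "\<dots> \<le> birkhoff_sum ?f w n + L * (\<Sum>i<n. dX ((shift ^^ i) q) ((shift ^^ i) w))"
    using birkhoff_sum_le_lipschitz[OF lipschitz_X_with_diff_const[OF lip] q w] .
  also have "\<dots> \<le> birkhoff_sum ?f w n + L"
  proof -
    have "(\<Sum>i<n. dX ((shift ^^ i) q) ((shift ^^ i) w)) \<le> dX ((shift ^^ n) q) ((shift ^^ n) w)"
      using orbit_dX_sum_le_if_agree[OF q w] periodic_ext_apply_less q_def by blast
    also have "\<dots> \<le> 1"
      using dX_le_1 shift_funpow_in_XX q w by blast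
    finally show ?thesis
      using lipschitz_X_with_nonneg[OF lip] by (simp add: mult_left_le)
  qed
  finally show ?thesis by simp
qed

lemma mane_eps_antimono: "\<epsilon> \<le> \<epsilon>' \<Longrightarrow> mane_eps \<phi> x y \<epsilon>' \<le> mane_eps \<phi> x y \<epsilon>"
  unfolding mane_eps_def Bset_def by (rule Inf_superset_mono) fastforce

lemma tendsto_at_right_SUP_if_antimono:
  fixes f :: "real \<Rightarrow> 'a::{complete_linorder, linorder_topology}"
  assumes antimono: "\<And>s t. a < s \<Longrightarrow> s \<le> t \<Longrightarrow> f t \<le> f s"
  shows "(f \<longlongrightarrow> (SUP t\<in>{a<..}. f t)) (at_right a)"
proof (rule increasing_tendsto)
  show "\<forall>\<^sub>F t in at_right a. f t \<le> (SUP t\<in>{a<..}. f t)"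
    using eventually_at_right_less[of a] by eventually_elim (simp add: SUP_upper)
next
  fix l assume "l < (SUP t\<in>{a<..}. f t)"
  then obtain s where s: "a < s" "l < f s"
    by (auto simp: less_SUP_iff)
  then show "\<forall>\<^sub>F t in at_right a. l < f t"
    unfolding eventually_at_right_field
    using antimono by (intro exI[of _ s]) (auto intro: less_le_trans)
qed

lemma mane_eps_le_mane: "0 < \<epsilon> \<Longrightarrow> mane_eps \<phi> x y \<epsilon> \<le> mane \<phi> x y"
proof -
  assume "0 < \<epsilon>"
  have "mane \<phi> x y = (SUP t\<in>{0<..}. mane_eps \<phi> x y t)"
    unfolding mane_def
    by (intro tendsto_Lim tendsto_at_right_SUP_if_antimono mane_eps_antimono) simp_all
  then show ?thesis
    using \<open>0 < \<epsilon>\<close> by (simp add: SUP_upper)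
qed

lemma aubry_closing_segment:
  assumes "x \<in> aubry \<phi>" "0 < \<epsilon>"
  obtains m z where "1 \<le> m" "z \<in> Bset x x m \<epsilon>" "birkhoff_sum (\<lambda>y. \<phi> y - alpha \<phi>) z m < \<epsilon>"
proof -
  have "mane_eps \<phi> x x \<epsilon> < ereal \<epsilon>"
    using mane_eps_le_mane[OF assms(2), of \<phi> x x] assms unfolding aubry_def
    by (simp add: zero_ereal_def order_le_less_trans)
  then show ?thesis
    using that unfolding mane_eps_def Inf_less_iff birkhoff_sum_def by auto
qed

lemma dX_periodic_ext_closing:
  assumes x: "x \<in> XX" and z: "z \<in> XX" and m: "1 \<le> m"
    and start: "dX x z < \<epsilon>" and return: "dX ((shift ^^ m) z) x < \<epsilon>"
  shows "dX ((shift ^^ m) z) (periodic_ext z m) < 4 * \<epsilon>"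
    and "dX x (periodic_ext z m) < 3 * \<epsilon>"
proof -
  define q where "q = periodic_ext z m"
  define D where "D = dX ((shift ^^ m) z) q"
  have q: "q \<in> XX"
    unfolding q_def using periodic_ext_in_XX[OF z] .
  have "dX z q = D / 2 ^ m"
    unfolding D_def q_def
    using dX_eq_shift_funpow_div_if_agree[OF z periodic_ext_in_XX[OF z], of m]
    by (simp add: periodic_ext_apply_less shift_funpow_periodic_ext)
  also have "\<dots> \<le> D / 2"
    unfolding D_def using m dX_nonneg[OF shift_funpow_in_XX[OF z] q]
    by (intro divide_left_mono) (auto intro: order_trans[OF _ power_increasing[of 1]])
  finally have zq: "dX z q \<le> D / 2" .
  have "D \<le> dX ((shift ^^ m) z) x + dX x q"
    unfolding D_def using dX_triangle[OF shift_funpow_in_XX[OF z] x q] .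
  then have D: "D < 4 * \<epsilon>"
    using dX_triangle[OF x z q] start return zq by linarith
  then show "dX ((shift ^^ m) z) (periodic_ext z m) < 4 * \<epsilon>"
    unfolding D_def q_def .
  show "dX x (periodic_ext z m) < 3 * \<epsilon>"
    using dX_triangle[OF x z q] start zq D unfolding q_def by linarith
qed

lemma birkhoff_sum_le_of_closing_segment:
  assumes lip: "lipschitz_X_with L \<phi>" and x: "x \<in> XX" and z: "z \<in> XX" and m: "1 \<le> m"
    and start: "dX x z < \<epsilon>" and return: "dX ((shift ^^ m) z) x < \<epsilon>"
    and segment: "birkhoff_sum (\<lambda>y. \<phi> y - alpha \<phi>) z m < \<epsilon>"
  shows "birkhoff_sum (\<lambda>y. \<phi> y - alpha \<phi>) x n \<le> L + \<epsilon> * (n * (1 + 4 * L) + 3 * L * n * 2 ^ n)"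
proof -
  let ?f = "\<lambda>y. \<phi> y - alpha \<phi>"
  define q where "q = periodic_ext z m"
  have lip_f: "lipschitz_X_with L ?f"
    using lipschitz_X_with_diff_const[OF lip] .
  have L: "0 \<le> L"
    using lipschitz_X_with_nonneg[OF lip] .
  have q: "q \<in> XX" and periodic: "(shift ^^ m) q = q"
    unfolding q_def using periodic_ext_in_XX[OF z] shift_funpow_periodic_ext by auto
  note closing = dX_periodic_ext_closing[OF x z m start return, folded q_def]
  have "birkhoff_sum ?f q m \<le> birkhoff_sum ?f z m + L * (\<Sum>i<m. dX ((shift ^^ i) q) ((shift ^^ i) z))"
    using birkhoff_sum_le_lipschitz[OF lip_f q z] .
  also have "\<dots> \<le> birkhoff_sum ?f z m + L * (4 * \<epsilon>)"
  proof -
    have "(\<Sum>i<m. dX ((shift ^^ i) q) ((shift ^^ i) z)) \<le> dX ((shift ^^ m) q) ((shift ^^ m) z)"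
      using orbit_dX_sum_le_if_agree[OF q z] periodic_ext_apply_less q_def by blast
    also have "\<dots> < 4 * \<epsilon>"
      unfolding periodic using closing(1) by (simp only: dX_commute[of q])
    finally show ?thesis
      using L by (simp add: mult_left_mono)
  qed
  finally have period: "birkhoff_sum ?f q m \<le> \<epsilon> * (1 + 4 * L)"
    using segment by (simp add: algebra_simps)
  have "n * birkhoff_sum ?f q m = birkhoff_sum ?f q (n * m)"
    using birkhoff_sum_periodic[OF periodic] by simp
  also have "\<dots> = birkhoff_sum ?f q n + birkhoff_sum ?f ((shift ^^ n) q) (n * m - n)"
    using birkhoff_sum_add[of ?f q n "n * m - n"] m by simp
  finally have q_sum: "birkhoff_sum ?f q n \<le> n * birkhoff_sum ?f q m + L"
    using birkhoff_sum_ge_neg_lipschitz_const[OF lip shift_funpow_in_XX[OF q], of n "n * m - n"]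
    by linarith
  have "birkhoff_sum ?f x n \<le> birkhoff_sum ?f q n + L * (\<Sum>i<n. dX ((shift ^^ i) x) ((shift ^^ i) q))"
    using birkhoff_sum_le_lipschitz[OF lip_f x q] .
  also have "\<dots> \<le> birkhoff_sum ?f q n + L * (n * (2 ^ n * (3 * \<epsilon>)))"
  proof -
    have "(\<Sum>i<n. dX ((shift ^^ i) x) ((shift ^^ i) q)) \<le> n * (2 ^ n * dX x q)"
      using orbit_dX_sum_le[OF x q] .
    also have "\<dots> \<le> n * (2 ^ n * (3 * \<epsilon>))"
      using closing(2) by (intro mult_left_mono) auto
    finally show ?thesis
      using L by (simp add: mult_left_mono)
  qed
  also have "\<dots> \<le> n * (\<epsilon> * (1 + 4 * L)) + L + L * (n * (2 ^ n * (3 * \<epsilon>)))"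
    using q_sum mult_left_mono[OF period, of "real n"] by linarith
  also have "\<dots> = L + \<epsilon> * (n * (1 + 4 * L) + 3 * L * n * 2 ^ n)"
    by (simp add: algebra_simps)
  finally show ?thesis .
qed

lemma aubry_birkhoff_sum_le_lipschitz_const:
  assumes lip: "lipschitz_X_with L \<phi>" and aubry: "x \<in> aubry \<phi>"
  shows "birkhoff_sum (\<lambda>y. \<phi> y - alpha \<phi>) x n \<le> L"
proof (rule field_le_epsilon)
  fix e :: real assume "0 < e"
  define C where "C = n * (1 + 4 * L) + 3 * L * n * 2 ^ n"
  have "0 \<le> C"
    unfolding C_def using lipschitz_X_with_nonneg[OF lip] by simp
  define \<epsilon> where "\<epsilon> = e / (C + 1)"
  have "0 < \<epsilon>"
    unfolding \<epsilon>_def using \<open>0 < e\<close> \<open>0 \<le> C\<close> by simp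
  have "\<epsilon> * C = e * (C / (C + 1))"
    unfolding \<epsilon>_def by simp
  also have "\<dots> \<le> e"
    using \<open>0 < e\<close> \<open>0 \<le> C\<close> by (intro mult_left_le) auto
  finally have "\<epsilon> * C \<le> e" .
  obtain m z where m: "1 \<le> m" and "z \<in> Bset x x m \<epsilon>"
    and segment: "birkhoff_sum (\<lambda>y. \<phi> y - alpha \<phi>) z m < \<epsilon>"
    using aubry_closing_segment[OF aubry \<open>0 < \<epsilon>\<close>] .
  then have z: "z \<in> XX" and start: "dX x z < \<epsilon>" and return: "dX ((shift ^^ m) z) x < \<epsilon>"
    unfolding Bset_def by auto
  have x: "x \<in> XX"
    using aubry by (simp add: aubry_def)
  have "birkhoff_sum (\<lambda>y. \<phi> y - alpha \<phi>) x n \<le> L + \<epsilon> * C"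
    unfolding C_def using birkhoff_sum_le_of_closing_segment[OF lip x z m start return segment] .
  then show "birkhoff_sum (\<lambda>y. \<phi> y - alpha \<phi>) x n \<le> L + e"
    using \<open>\<epsilon> * C \<le> e\<close> by linarith
qed

theorem proposition2p9:
  fixes \<phi> :: "seq \<Rightarrow> real" and x :: seq
  assumes "lipschitz_X \<phi>"
    and "x \<in> aubry \<phi>"
  shows "\<exists>C. \<forall>n::nat. \<bar>\<Sum>i<n. \<phi> ((shift ^^ i) x) - alpha \<phi>\<bar> \<le> C"
proof -
  obtain L where lip: "lipschitz_X_with L \<phi>"
    using lipschitz_X_obtain_const[OF assms(1)] .
  have x: "x \<in> XX"
    using assms(2) by (simp add: aubry_def)
  have "\<bar>birkhoff_sum (\<lambda>y. \<phi> y - alpha \<phi>) x n\<bar> \<le> L" for n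
    using birkhoff_sum_ge_neg_lipschitz_const[OF lip x, of n]
      aubry_birkhoff_sum_le_lipschitz_const[OF lip assms(2), of n]
    by linarith
  then show ?thesis
    unfolding birkhoff_sum_def by blast
qed

end
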